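(* For every base $b\ge 2$ there exist infinitely many positive integers that are not $b$-wARH numbers.
   Context: Fix a base $b\ge 2$. $s_b(N)$ is the sum of the base-$b$ digits of $N$. For a positive integer $X$, its reversal $X^R$ is the integer whose base-$b$ representation is that of $X$ written in reverse order (leading zeros of the result are dropped). A positive integer $N$ is a $b$-wARH number if there exists an integer $A\ge 0$ such that $N=(A+s_b(N))+(A+s_b(N))^R$. *)

theory Defs
  imports Main
begin

fun digits :: "nat \<Rightarrow> nat \<Rightarrow> nat list" where
  "digits b n = (if b < 2 \<or> n = 0 then [] else n mod b # digits b (n div b))"

fun from_digits :: "nat \<Rightarrow> nat list \<Rightarrow> nat" where
  "from_digits b [] = 0"
| "from_digits b (d # ds) = d + b * from_digits b ds"

definition digit_sum :: "nat \<Rightarrow> nat \<Rightarrow> nat" where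
  "digit_sum b n = sum_list (digits b n)"

(* reversal: read the base-b representation backwards; leading zeros vanish automatically *)
definition reversal :: "nat \<Rightarrow> nat \<Rightarrow> nat" where
  "reversal b n = from_digits b (rev (digits b n))"

definition wARH :: "nat \<Rightarrow> nat \<Rightarrow> bool" where
  "wARH b N \<longleftrightarrow> N > 0 \<and>
     (\<exists>A::nat. N = (A + digit_sum b N) + reversal b (A + digit_sum b N))"

end

theory Submission
  imports Defs
begin

text \<open>No power \<open>b^k\<close> with \<open>k \<ge> 2\<close> has the form \<open>X + X\<^sup>R\<close>, so none of them is a \<open>b\<close>-wARH number.
  Indeed, if \<open>X\<close> has \<open>n\<close> digits then \<open>b^(n-1) < X + X\<^sup>R < b^(n+1)\<close>, forcing \<open>k = n\<close>. Reducing
  modulo \<open>b\<close>, the first digit \<open>d\<close> and the nonzero last digit \<open>L\<close> of \<open>X\<close> satisfy \<open>d + L = b\<close>;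
  but then already the four outer terms \<open>d + b^(n-1) L\<close> of \<open>X\<close> and \<open>L + b^(n-1) d\<close> of \<open>X\<^sup>R\<close>
  add up to \<open>b + b^n > b^n\<close>.\<close>

declare digits.simps[simp del]

lemma from_digits_append:
  "from_digits b (xs @ ys) = from_digits b xs + b ^ length xs * from_digits b ys"
  by (induction xs) (auto simp: algebra_simps)

lemma from_digits_less:
  assumes "\<forall>d\<in>set ds. d < b"
  shows "from_digits b ds < b ^ length ds"
  using assms
proof (induction ds)
  case (Cons d ds)
  then have "b * (from_digits b ds + 1) \<le> b * b ^ length ds"
    by (intro mult_le_mono2) simp
  then show ?case
    using Cons.prems by (simp add: algebra_simps)
qed simp

lemma from_digits_digits: "b \<ge> 2 \<Longrightarrow> from_digits b (digits b n) = n"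
  by (induction b n rule: digits.induct) (subst digits.simps, auto)

lemma digits_less_base: "d \<in> set (digits b n) \<Longrightarrow> d < b"
  by (induction b n rule: digits.induct) (subst (asm) digits.simps, auto split: if_splits)

lemma digits_eq_Nil_iff: "b \<ge> 2 \<Longrightarrow> digits b n = [] \<longleftrightarrow> n = 0"
  by (subst digits.simps) auto

lemma last_digits_neq_0:
  assumes "b \<ge> 2" "n \<noteq> 0"
  shows "last (digits b n) \<noteq> 0"
  using assms
proof (induction b n rule: digits.induct)
  case (1 b n)
  have unfold: "digits b n = n mod b # digits b (n div b)"
    using "1.prems" by (subst digits.simps) simp
  show ?case
  proof (cases "n div b = 0")
    case True
    then show ?thesis
      using "1.prems" unfold digits_eq_Nil_iff[of b 0] by (simp add: div_eq_0_iff)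
  next
    case False
    then show ?thesis
      using "1.IH" "1.prems" unfold digits_eq_Nil_iff by auto
  qed
qed

lemma sum_with_reversed_digits_neq_power:
  assumes "b \<ge> 2" and digits: "\<forall>d\<in>set ds. d < b"
    and len: "length ds \<ge> 2" and last: "last ds \<noteq> 0"
  shows "from_digits b ds + from_digits b (rev ds) \<noteq> b ^ length ds"
proof
  assume sum: "from_digits b ds + from_digits b (rev ds) = b ^ length ds"
  obtain d ms L where ds: "ds = d # ms @ [L]"
    using len by (cases ds; cases "tl ds" rule: rev_cases) auto
  define k where "k = length ms"
  have "d < b" "L < b" "L \<noteq> 0"
    using digits last ds by auto
  define M where "M = from_digits b ms + from_digits b (rev ms)"
  have split: "from_digits b ds + from_digits b (rev ds) = (d + L) + b * M + b * b ^ k * (d + L)"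
    by (simp add: ds k_def M_def from_digits_append algebra_simps)
  have "(d + L) + b * (M + b ^ k * (d + L)) = b * b ^ Suc k"
    using sum split by (simp add: ds k_def algebra_simps)
  then have "b dvd d + L"
    by (metis dvd_add_right_iff dvd_triv_left add.commute)
  then obtain q where q: "d + L = b * q" ..
  have "0 < b * q" "b * q < b * 2"
    using q \<open>d < b\<close> \<open>L < b\<close> \<open>L \<noteq> 0\<close> by linarith+
  then have "q = 1"
    by simp
  with q have dL: "d + L = b"
    by simp
  show False
    using sum split dL \<open>b \<ge> 2\<close> by (simp add: ds k_def)
qed

lemma add_reversal_neq_power:
  assumes b: "b \<ge> 2" and k: "k \<ge> 2"
  shows "X + reversal b X \<noteq> b ^ k"
proof
  assume sum: "X + reversal b X = b ^ k"
  define ds where "ds = digits b X"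
  define n where "n = length ds"
  have "X \<noteq> 0"
  proof
    assume "X = 0"
    then have "b ^ k = 0"
      using sum by (simp add: reversal_def digits.simps)
    then show False
      using b by simp
  qed
  then have "ds \<noteq> []" and last: "last ds \<noteq> 0"
    using b digits_eq_Nil_iff last_digits_neq_0 by (auto simp: ds_def)
  have digits: "\<forall>d\<in>set ds. d < b"
    using digits_less_base ds_def by blast
  have X: "X = from_digits b ds" and R: "reversal b X = from_digits b (rev ds)"
    using from_digits_digits b by (simp_all add: ds_def reversal_def)
  have "b ^ k < 2 * b ^ n"
    using sum X R from_digits_less[OF digits] from_digits_less[of "rev ds" b] digits
    by (simp add: n_def)
  also have "\<dots> \<le> b ^ Suc n"
    using b by simp
  finally have "k < Suc n"
    using b power_strict_increasing_iff[of b k "Suc n"] by linarith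
  obtain xs L where ds: "ds = xs @ [L]"
    using \<open>ds \<noteq> []\<close> by (cases ds rule: rev_cases) auto
  have "b ^ (n - 1) \<le> b ^ (n - 1) * L"
    using last ds by simp
  also have "\<dots> \<le> X"
    using X ds by (simp add: n_def from_digits_append)
  finally have "b ^ (n - 1) \<le> X" .
  moreover have "reversal b X \<ge> L"
    using R ds by simp
  ultimately have "b ^ (n - 1) < b ^ k"
    using sum last ds by simp
  then have "n = k"
    using b \<open>k < Suc n\<close> k by simp
  then show False
    using sum_with_reversed_digits_neq_power[OF b digits _ last] sum X R k n_def by simp
qed

theorem proposition9:
  fixes b :: nat
  assumes "b \<ge> 2"
  shows "infinite {N::nat. N > 0 \<and> \<not> wARH b N}"
proof -
  have "\<not> wARH b (b ^ k)" if "k \<ge> 2" for k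
    using add_reversal_neq_power[OF assms that] unfolding wARH_def by metis
  then have "range (\<lambda>m. b ^ (m + 2)) \<subseteq> {N. N > 0 \<and> \<not> wARH b N}"
    using assms by (auto simp del: power_Suc power_add)
  moreover have "inj (\<lambda>m::nat. b ^ (m + 2))"
    using assms by (simp add: inj_on_def)
  then have "infinite (range (\<lambda>m::nat. b ^ (m + 2)))"
    using finite_imageD infinite_UNIV_nat by blast
  ultimately show ?thesis
    using infinite_super by blast
qed

end
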